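(* Let $n\in\mathbb{N}$, $a<b$, and let $f:[a,b]\to\mathbb{R}$ be $(2n-1)$-convex. If $x_1=a$, $x_2,\dots,x_n\in(a,b)$ and $x_{n+1}=b$, then there exists a polynomial $p\in\Pi_{2n-1}$ such that $p(x_i)=f(x_i)$ for $i=1,\dots,n+1$ and $p(x)\ge f(x)$ for all $x\in[a,b]$.
   Context: $\Pi_m$ denotes the set of real polynomials of degree at most $m$. Divided differences are defined recursively by $[x_1;f]:=f(x_1)$ and $[x_1,\dots,x_{m+1};f]:=\frac{[x_2,\dots,x_{m+1};f]-[x_1,\dots,x_m;f]}{x_{m+1}-x_1}$ for pairwise distinct points. For $m\in\mathbb{N}$, a function $f$ on an interval $I$ is called $m$-convex if $[x_1,\dots,x_{m+2};f]\ge 0$ for all pairwise distinct $x_1,\dots,x_{m+2}\in I$. *)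

theory Defs
  imports Complex_Main "HOL-Computational_Algebra.Polynomial"
begin

primrec divdiff :: "(nat \<Rightarrow> real) \<Rightarrow> nat \<Rightarrow> nat \<Rightarrow> (real \<Rightarrow> real) \<Rightarrow> real" where
  "divdiff x i 0 f = f (x i)"
| "divdiff x i (Suc k) f =
     (divdiff x (Suc i) k f - divdiff x i k f) / (x (i + Suc k) - x i)"

definition mconvex :: "nat \<Rightarrow> real set \<Rightarrow> (real \<Rightarrow> real) \<Rightarrow> bool" where
  "mconvex m I f \<longleftrightarrow>
     (\<forall>x::nat \<Rightarrow> real. (\<forall>i\<le>m+1. x i \<in> I) \<and> inj_on x {..m+1} \<longrightarrow> divdiff x 0 (m+1) f \<ge> 0)"

end

theory Submission
  imports Defs "HOL-Analysis.Analysis"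
begin

text \<open>
  Write \<open>Z\<close> for the interior nodes. Pairing every \<open>z \<in> Z\<close> with \<open>z + h\<close> gives \<open>2n\<close> nodes
  \<open>N\<^sub>h\<close>, and the Lagrange interpolant \<open>P\<^sub>h\<close> of \<open>f\<close> at \<open>N\<^sub>h\<close> has the remainder
  \<open>f t - P\<^sub>h t = [t, N\<^sub>h; f] (t - a) (t - b) \<Prod>\<^sub>z (t - z) (t - z - h)\<close>.
  The divided difference is nonnegative by \<open>(2n-1)\<close>-convexity and the node polynomial is
  nonpositive on \<open>[a,b]\<close> outside the gaps \<open>(z, z + h)\<close>, so \<open>P\<^sub>h\<close> lies above \<open>f\<close> there.
  As \<open>h \<rightarrow> 0+\<close> the \<open>P\<^sub>h\<close> converge: at a point \<open>s\<close> off the nodes,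
  \<open>[s, N\<^sub>h; f] = ([b, s, Z, Z + h; f] - [a, s, Z, Z + h; f]) / (b - a)\<close>, and moving the points
  \<open>z + h\<close> towards \<open>z\<close> changes each of these two differences monotonically (again by convexity,
  one point at a time) while they stay bounded below by their value at \<open>Z - \<delta>\<close>.
  Pointwise convergence at \<open>2n\<close> points determines the limit polynomial, which interpolates
  \<open>f\<close> at \<open>a\<close>, \<open>b\<close> and \<open>Z\<close> and lies above \<open>f\<close>.
\<close>

section \<open>Divided differences on finite node sets\<close>

text \<open>The symmetric form of \<open>[A; f]\<close>: it needs no ordering of the nodes in \<open>A\<close>.\<close>

definition set_divdiff :: "(real \<Rightarrow> real) \<Rightarrow> real set \<Rightarrow> real" where
  "set_divdiff f A = (\<Sum>u\<in>A. f u / (\<Prod>v\<in>A - {u}. u - v))"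

lemma prod_insert_Diff:
  "finite B \<Longrightarrow> v \<notin> B \<Longrightarrow> w \<in> B \<Longrightarrow>
    (\<Prod>x\<in>insert v B - {w}. g x) = g v * (\<Prod>x\<in>B - {w}. g x)"
  by (auto simp: insert_Diff_if)

lemma set_divdiff_insert:
  assumes "finite B" "v \<notin> B"
  shows "set_divdiff f (insert v B) =
    f v / (\<Prod>u\<in>B. v - u) + (\<Sum>w\<in>B. f w / ((w - v) * (\<Prod>u\<in>B - {w}. w - u)))"
  using assms by (simp add: set_divdiff_def prod_insert_Diff cong: sum.cong)

lemma set_divdiff_insert_insert:
  assumes "finite B" "u \<notin> B" "v \<notin> B" "u \<noteq> v"
  shows "set_divdiff f (insert u (insert v B)) =
    (set_divdiff f (insert v B) - set_divdiff f (insert u B)) / (v - u)"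
proof -
  define P where "P w = (\<Prod>x\<in>B - {w}. w - x)" for w
  define S where "S c = (\<Sum>w\<in>B. f w / ((w - c) * P w))" for c
  define T where "T = (\<Sum>w\<in>B. f w / ((w - u) * ((w - v) * P w)))"
  have "f w / ((w - v) * P w) - f w / ((w - u) * P w) = (v - u) * (f w / ((w - u) * ((w - v) * P w)))"
    if "w \<in> B" for w
  proof -
    have "w - u \<noteq> 0" "w - v \<noteq> 0" "P w \<noteq> 0"
      using assms that unfolding P_def by auto
    then show ?thesis by (simp add: divide_simps) (simp add: algebra_simps)
  qed
  then have "S v - S u = (v - u) * T"
    unfolding S_def T_def by (simp add: sum_distrib_left sum_subtractf[symmetric])
  then have Sv: "S v = S u + (v - u) * T"
    by simp
  have D: "set_divdiff f (insert u (insert v B)) =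
      f u / ((u - v) * (\<Prod>x\<in>B. u - x)) + (f v / ((v - u) * (\<Prod>x\<in>B. v - x)) + T)"
    using assms by (simp add: set_divdiff_insert prod_insert_Diff P_def T_def cong: sum.cong)
  have Dc: "set_divdiff f (insert c B) = f c / (\<Prod>x\<in>B. c - x) + S c" if "c \<notin> B" for c
    using assms that by (simp add: set_divdiff_insert P_def S_def)
  have "(\<Prod>x\<in>B. u - x) \<noteq> 0" "(\<Prod>x\<in>B. v - x) \<noteq> 0" "u - v \<noteq> 0" "v - u \<noteq> 0"
    using assms by auto
  then show ?thesis
    unfolding D Dc[OF assms(2)] Dc[OF assms(3)] Sv by (simp add: divide_simps) (simp add: algebra_simps)
qed

lemma divdiff_eq_set_divdiff:
  assumes "inj_on x {i..i+k}"
  shows "divdiff x i k f = set_divdiff f (x ` {i..i+k})"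
  using assms
proof (induction k arbitrary: i)
  case 0
  then show ?case by (simp add: set_divdiff_def)
next
  case (Suc k)
  define B where "B = x ` {Suc i..i+k}"
  have "{i..i + Suc k} = insert i (insert (i + Suc k) {Suc i..i+k})"
    "{Suc i..Suc i + k} = insert (i + Suc k) {Suc i..i+k}" "{i..i + k} = insert i {Suc i..i+k}"
    by auto
  then have nodes: "x ` {i..i + Suc k} = insert (x i) (insert (x (i + Suc k)) B)"
    "x ` {Suc i..Suc i + k} = insert (x (i + Suc k)) B" "x ` {i..i + k} = insert (x i) B"
    unfolding B_def by auto
  have "x i \<notin> B" "x (i + Suc k) \<notin> B" "x i \<noteq> x (i + Suc k)"
    unfolding B_def using inj_on_image_mem_iff[OF Suc.prems] inj_on_contraD[OF Suc.prems] by auto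
  moreover have "inj_on x {Suc i..Suc i+k}" "inj_on x {i..i+k}"
    by (rule inj_on_subset[OF Suc.prems], simp)+
  ultimately show ?case
    using Suc.IH nodes set_divdiff_insert_insert[of B "x i" "x (i + Suc k)" f]
    by (simp add: B_def)
qed

lemma mconvex_imp_set_divdiff_nonneg:
  assumes "mconvex m I f" "A \<subseteq> I" "card A = m + 2"
  shows "set_divdiff f A \<ge> 0"
proof -
  have "finite A"
    using assms(3) card.infinite by fastforce
  then obtain x where x: "bij_betw x {..m+1} A"
    using assms(3) by (metis Suc_eq_plus1 add_Suc_right bij_betw_iff_card card_atMost finite_atMost one_add_one)
  then have "inj_on x {..m+1}" "x ` {..m+1} = A" "\<forall>i\<le>m+1. x i \<in> I"
    using assms(2) by (auto simp: bij_betw_def)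
  moreover from this have "divdiff x 0 (m+1) f = set_divdiff f A"
    using divdiff_eq_set_divdiff[of x 0 "m+1" f] by (simp add: atLeast0AtMost)
  ultimately show ?thesis
    using assms(1) unfolding mconvex_def by metis
qed

lemma set_divdiff_insert_mono:
  assumes "mconvex m I f" "finite P" "card P = m" "P \<subseteq> I"
    and "u \<le> v" "u \<in> I - P" "v \<in> I - P"
  shows "set_divdiff f (insert u P) \<le> set_divdiff f (insert v P)"
proof (cases "u = v")
  case False
  with assms have "set_divdiff f (insert u (insert v P)) \<ge> 0"
    by (intro mconvex_imp_set_divdiff_nonneg[OF assms(1)]) auto
  then show ?thesis
    using set_divdiff_insert_insert[of P u v f] assms False by (simp add: zero_le_divide_iff)
qed simp

lemma set_divdiff_shift_mono:
  assumes conv: "mconvex m I f" and "k \<le> k'" "finite Z" "finite W" "card W + card Z = m + 1"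
    and "W \<subseteq> I" "\<forall>z\<in>Z. z + k \<in> I - W \<and> z + k' \<in> I - W"
    and "\<forall>z\<in>Z. \<forall>z'\<in>Z. \<forall>j\<in>{k,k'}. \<forall>j'\<in>{k,k'}. z + j = z' + j' \<longrightarrow> z = z'"
  shows "set_divdiff f (W \<union> (\<lambda>z. z + k) ` Z) \<le> set_divdiff f (W \<union> (\<lambda>z. z + k') ` Z)"
  using assms(3-)
proof (induction Z arbitrary: W rule: finite_induct)
  case empty
  then show ?case by simp
next
  case (insert v Z)
  define P where "P = W \<union> (\<lambda>z. z + k) ` Z"
  have shifts: "\<forall>z\<in>Z. z + k \<in> I - W \<and> z + k' \<in> I - W" "v + k \<in> I - W" "v + k' \<in> I - W"
    using insert.prems(4) by auto
  have inj: "z + j = z' + j' \<Longrightarrow> z = z'" if "z \<in> insert v Z" "z' \<in> insert v Z" "j \<in> {k,k'}" "j' \<in> {k,k'}"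
    for z z' j j'
    using insert.prems(5) that by blast
  have new: "z + j \<noteq> v + j'" if "z \<in> Z" "j \<in> {k,k'}" "j' \<in> {k,k'}" for z j j'
    using inj[of z v j j'] that insert.hyps(2) by auto
  have "W \<inter> (\<lambda>z. z + k) ` Z = {}" "inj_on (\<lambda>z. z + k) Z"
    using shifts(1) by (auto simp: inj_on_def)
  then have "card P = m"
    using insert.hyps insert.prems(1,2) by (simp add: P_def card_Un_disjoint card_image)
  moreover have "finite P" "P \<subseteq> I"
    using shifts(1) insert.hyps(1) insert.prems(1,3) unfolding P_def by auto
  moreover have "v + k \<in> I - P" "v + k' \<in> I - P"
    using shifts(2,3) new[of _ k] unfolding P_def by force+
  ultimately have "set_divdiff f (insert (v + k) P) \<le> set_divdiff f (insert (v + k') P)"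
    using set_divdiff_insert_mono[OF conv] \<open>k \<le> k'\<close> by simp
  also have "insert (v + k') P = insert (v + k') W \<union> (\<lambda>z. z + k) ` Z"
    by (simp add: P_def)
  also have "set_divdiff f \<dots> \<le> set_divdiff f (insert (v + k') W \<union> (\<lambda>z. z + k') ` Z)"
  proof (rule insert.IH)
    show "card (insert (v + k') W) + card Z = m + 1"
      using shifts(3) insert.hyps insert.prems(1,2) by simp
    show "\<forall>z\<in>Z. z + k \<in> I - insert (v + k') W \<and> z + k' \<in> I - insert (v + k') W"
      using shifts(1) new[of _ _ k'] by blast
    show "\<forall>z\<in>Z. \<forall>z'\<in>Z. \<forall>j\<in>{k,k'}. \<forall>j'\<in>{k,k'}. z + j = z' + j' \<longrightarrow> z = z'"
      using inj by blast
  qed (use insert.prems(1,3) shifts(3) in simp_all)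
  finally show ?case
    by (simp add: P_def)
qed

section \<open>Lagrange interpolation on finite node sets\<close>

definition lagrange_basis :: "real set \<Rightarrow> real \<Rightarrow> real \<Rightarrow> real" where
  "lagrange_basis A w t = (\<Prod>v\<in>A - {w}. t - v) / (\<Prod>v\<in>A - {w}. w - v)"

definition lagrange_poly :: "real set \<Rightarrow> (real \<Rightarrow> real) \<Rightarrow> real poly" where
  "lagrange_poly A g = (\<Sum>w\<in>A. smult (g w / (\<Prod>v\<in>A - {w}. w - v)) (\<Prod>v\<in>A - {w}. [:-v, 1:]))"

lemma poly_lagrange_poly: "poly (lagrange_poly A g) t = (\<Sum>w\<in>A. g w * lagrange_basis A w t)"
  by (simp add: lagrange_poly_def lagrange_basis_def poly_sum poly_prod)

lemma lagrange_basis_eq: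
  assumes "finite A" "w \<in> A" "u \<in> A"
  shows "lagrange_basis A w u = (if u = w then 1 else 0)"
  using assms by (auto simp: lagrange_basis_def)

lemma poly_lagrange_poly_node:
  assumes "finite A" "u \<in> A"
  shows "poly (lagrange_poly A g) u = g u"
proof -
  have "(\<Sum>w\<in>A. g w * lagrange_basis A w u) = (\<Sum>w\<in>A. if w = u then g w else 0)"
    using assms by (intro sum.cong) (auto simp: lagrange_basis_eq)
  then show ?thesis
    using assms by (simp add: poly_lagrange_poly)
qed

lemma degree_lagrange_poly_le:
  assumes "finite A"
  shows "degree (lagrange_poly A g) \<le> card A - 1"
  unfolding lagrange_poly_def
proof (rule degree_sum_le[OF assms])
  fix w assume "w \<in> A"
  have "degree (\<Prod>v\<in>A - {w}. [:-v, 1:]) \<le> card A - 1"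
    using degree_prod_sum_le[of "A - {w}" "\<lambda>v. [:-v, 1:]"] assms \<open>w \<in> A\<close> by (simp add: o_def)
  then show "degree (smult (g w / (\<Prod>v\<in>A - {w}. w - v)) (\<Prod>v\<in>A - {w}. [:-v, 1:])) \<le> card A - 1"
    using degree_smult_le order_trans by blast
qed

lemma lagrange_poly_poly:
  assumes "finite A" "degree q < card A"
  shows "lagrange_poly A (poly q) = q"
proof (rule poly_eqI_degree[of A])
  show "degree (lagrange_poly A (poly q)) < card A"
    using degree_lagrange_poly_le[OF assms(1), of "poly q"] assms(2) by linarith
qed (use assms poly_lagrange_poly_node in auto)

lemma lagrange_remainder:
  assumes "finite N" "t \<notin> N"
  shows "f t - poly (lagrange_poly N f) t = set_divdiff f (insert t N) * (\<Prod>v\<in>N. t - v)"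
proof -
  have summand: "f w / ((w - t) * (\<Prod>u\<in>N - {w}. w - u)) * (\<Prod>v\<in>N. t - v) = - (f w * lagrange_basis N w t)"
    if "w \<in> N" for w
  proof -
    have "(\<Prod>v\<in>N. t - v) = (t - w) * (\<Prod>u\<in>N - {w}. t - u)"
      using assms(1) that by (simp add: prod.remove)
    moreover have "w - t \<noteq> 0" "(\<Prod>u\<in>N - {w}. w - u) \<noteq> 0"
      using assms that by auto
    ultimately show ?thesis
      unfolding lagrange_basis_def by (simp add: divide_simps) (simp add: algebra_simps)
  qed
  have "(\<Prod>v\<in>N. t - v) \<noteq> 0"
    using assms by auto
  then have "set_divdiff f (insert t N) * (\<Prod>v\<in>N. t - v) =
      f t + (\<Sum>w\<in>N. f w / ((w - t) * (\<Prod>u\<in>N - {w}. w - u)) * (\<Prod>v\<in>N. t - v))"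
    using assms by (simp add: set_divdiff_insert distrib_right sum_distrib_right)
  also have "\<dots> = f t + (\<Sum>w\<in>N. - (f w * lagrange_basis N w t))"
    by (intro arg_cong[where f = "(+) (f t)"] sum.cong refl summand)
  also have "\<dots> = f t - poly (lagrange_poly N f) t"
    by (simp add: poly_lagrange_poly sum_negf)
  finally show ?thesis ..
qed

lemma le_poly_lagrange_poly:
  assumes conv: "mconvex m I f" and "finite N" "card N = m + 1" "N \<subseteq> I" "t \<in> I - N"
    and "(\<Prod>v\<in>N. t - v) \<le> 0"
  shows "f t \<le> poly (lagrange_poly N f) t"
proof -
  have "set_divdiff f (insert t N) \<ge> 0"
    using assms by (intro mconvex_imp_set_divdiff_nonneg[OF conv]) auto
  then have "set_divdiff f (insert t N) * (\<Prod>v\<in>N. t - v) \<le> 0"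
    using assms(6) by (rule mult_nonneg_nonpos)
  then show ?thesis
    using lagrange_remainder[of N t f] assms(2,5) by simp
qed

lemma tendsto_poly_lagrange_poly:
  assumes "finite S" "eventually (\<lambda>j. degree (P j) < card S) F"
    and "\<And>s. s \<in> S \<Longrightarrow> ((\<lambda>j. poly (P j) s) \<longlongrightarrow> L s) F"
  shows "((\<lambda>j. poly (P j) t) \<longlongrightarrow> poly (lagrange_poly S L) t) F"
proof -
  have "((\<lambda>j. \<Sum>w\<in>S. poly (P j) w * lagrange_basis S w t) \<longlongrightarrow> poly (lagrange_poly S L) t) F"
    unfolding poly_lagrange_poly by (intro tendsto_sum tendsto_mult_right assms(3))
  moreover have "eventually (\<lambda>j. (\<Sum>w\<in>S. poly (P j) w * lagrange_basis S w t) = poly (P j) t) F"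
    using assms(2) by eventually_elim (simp add: lagrange_poly_poly[OF assms(1)] poly_lagrange_poly[symmetric])
  ultimately show ?thesis
    by (rule Lim_transform_eventually)
qed

section \<open>Coalescing nodes\<close>

lemma finite_set_separated:
  fixes G :: "real set"
  assumes "finite G"
  obtains \<delta> where "\<delta> > 0" "\<And>u v. u \<in> G \<Longrightarrow> v \<in> G \<Longrightarrow> u \<noteq> v \<Longrightarrow> \<delta> < \<bar>u - v\<bar>"
proof
  define D where "D = insert 1 {\<bar>u - v\<bar> | u v. u \<in> G \<and> v \<in> G \<and> u \<noteq> v}"
  have "finite D"
  proof -
    have "{\<bar>u - v\<bar> | u v. u \<in> G \<and> v \<in> G \<and> u \<noteq> v} \<subseteq> (\<lambda>(u, v). \<bar>u - v\<bar>) ` (G \<times> G)"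
      by auto
    then show ?thesis
      unfolding D_def using assms finite_subset by blast
  qed
  moreover have "\<forall>d\<in>D. d > 0"
    unfolding D_def by auto
  ultimately have "Min D > 0"
    unfolding D_def by simp
  then show "Min D / 2 > 0"
    by simp
  fix u v assume "u \<in> G" "v \<in> G" "u \<noteq> v"
  then have "Min D \<le> \<bar>u - v\<bar>"
    using \<open>finite D\<close> unfolding D_def by (intro Min_le) auto
  then show "Min D / 2 < \<bar>u - v\<bar>"
    using \<open>Min D > 0\<close> by simp
qed

lemma set_divdiff_shift_tendsto:
  assumes conv: "mconvex m {a..b} f" and "finite W" "W \<subseteq> {a..b}" "Z \<subseteq> W \<inter> {a<..<b}"
    and "card W + card Z = m + 1"
  shows "\<exists>L. ((\<lambda>h. set_divdiff f (W \<union> (\<lambda>z. z + h) ` Z)) \<longlongrightarrow> L) (at_right 0)"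
proof -
  define g where "g h = set_divdiff f (W \<union> (\<lambda>z. z + h) ` Z)" for h
  obtain \<delta> where "\<delta> > 0" and sep: "\<And>u v. u \<in> insert a (insert b W) \<Longrightarrow> v \<in> insert a (insert b W) \<Longrightarrow>
      u \<noteq> v \<Longrightarrow> 2 * \<delta> < \<bar>u - v\<bar>"
    using finite_set_separated[of "insert a (insert b W)"] assms(2)
    by (metis field_sum_of_halves finite_insert half_gt_zero mult_2)
  have shift_in: "z + k \<in> {a..b} - W" if "z \<in> Z" and k: "-\<delta> \<le> k" "k \<le> \<delta>" "k \<noteq> 0" for z k
  proof -
    have "z \<in> W" "a < z" "z < b"
      using assms(4) that(1) by auto
    then have "2 * \<delta> < z - a" "2 * \<delta> < b - z"
      using sep[of z a] sep[of z b] by auto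
    moreover have "z + k \<noteq> w" if "w \<in> W" for w
      using sep[of z w] \<open>z \<in> W\<close> that k by force
    ultimately show ?thesis
      using k \<open>\<delta> > 0\<close> by auto
  qed
  have shift_inj: "z = z'" if "z \<in> Z" "z' \<in> Z" "\<bar>j\<bar> \<le> \<delta>" "\<bar>j'\<bar> \<le> \<delta>" "z + j = z' + j'"
    for z z' j j'
    using sep[of z z'] assms(4) that by fastforce
  have "finite Z"
    using assms(2,4) finite_subset by blast
  have mono: "g k \<le> g k'"
    if "k \<le> k'" "-\<delta> \<le> k" "k' \<le> \<delta>" "k \<noteq> 0" "k' \<noteq> 0" for k k'
    unfolding g_def
  proof (rule set_divdiff_shift_mono[OF conv \<open>k \<le> k'\<close> \<open>finite Z\<close> assms(2) assms(5) assms(3)])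
    have "k \<le> \<delta>" "-\<delta> \<le> k'" "\<bar>k\<bar> \<le> \<delta>" "\<bar>k'\<bar> \<le> \<delta>"
      using that by auto
    then show "\<forall>z\<in>Z. z + k \<in> {a..b} - W \<and> z + k' \<in> {a..b} - W"
      "\<forall>z\<in>Z. \<forall>z'\<in>Z. \<forall>j\<in>{k,k'}. \<forall>j'\<in>{k,k'}. z + j = z' + j' \<longrightarrow> z = z'"
      using shift_in[of _ k] shift_in[of _ k'] shift_inj that by blast+
  qed
  have "(g \<longlongrightarrow> Inf (g ` ({0<..} \<inter> {..\<delta>}))) (at 0 within ({0<..} \<inter> {..\<delta>}))"
    by (rule Lim_right_bound[where K = "g (-\<delta>)"]) (use mono \<open>\<delta> > 0\<close> in auto)
  moreover have "at 0 within ({0<..} \<inter> {..\<delta>}) = at_right (0::real)"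
    using \<open>\<delta> > 0\<close> by (intro at_within_nhd[where S = "{..<\<delta>}"]) auto
  ultimately show ?thesis
    unfolding g_def by auto
qed

definition doubled_nodes :: "real \<Rightarrow> real \<Rightarrow> real set \<Rightarrow> real \<Rightarrow> real set" where
  "doubled_nodes a b Z h = insert a (insert b (Z \<union> (\<lambda>z. z + h) ` Z))"

lemma eventually_shift_into:
  fixes Z G :: "real set"
  assumes "finite Z" "finite G" "Z \<subseteq> {a<..<b}"
  shows "\<forall>\<^sub>F h in at_right 0. \<forall>z\<in>Z. z + h \<in> {a<..<b} - G"
proof -
  have avoid: "\<forall>\<^sub>F h in at_right 0. h \<noteq> c" for c :: real
  proof (cases "c > 0")
    case True
    show ?thesis
      using eventually_at_right_real[OF True] by (rule eventually_mono) auto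
  next
    case False
    show ?thesis
      using eventually_at_right_less[of 0] by (rule eventually_mono) (use False in auto)
  qed
  have "\<forall>\<^sub>F h in at_right 0. z + h \<in> {a<..<b} - G" if "z \<in> Z" for z
  proof -
    have "\<forall>\<^sub>F h in at_right 0. \<forall>g\<in>G. h \<noteq> g - z"
      using assms(2) avoid by (simp add: eventually_ball_finite_distrib)
    moreover have "\<forall>\<^sub>F h in at_right 0. h \<in> {0<..<b - z}"
      using assms(3) that by (intro eventually_at_right_real) auto
    ultimately show ?thesis
      by eventually_elim (use assms(3) that in force)
  qed
  then show ?thesis
    using assms(1) by (simp add: eventually_ball_finite_distrib)
qed

lemma doubled_nodes_shifted:
  assumes "a < b" "finite Z" "Z \<subseteq> {a<..<b}" "\<forall>z\<in>Z. z + h \<in> {a<..<b} - Z"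
  shows "card (doubled_nodes a b Z h) = 2 * card Z + 2"
    and "doubled_nodes a b Z h \<subseteq> {a..b}"
    and "(\<Prod>v\<in>doubled_nodes a b Z h. g v) = g a * g b * (\<Prod>z\<in>Z. g z * g (z + h))"
proof -
  have disj: "Z \<inter> (\<lambda>z. z + h) ` Z = {}" and ab: "a \<notin> Z \<union> (\<lambda>z. z + h) ` Z" "b \<notin> Z \<union> (\<lambda>z. z + h) ` Z"
    using assms(3,4) by fastforce+
  have inj: "inj_on (\<lambda>z. z + h) Z"
    by (simp add: inj_on_def)
  show "card (doubled_nodes a b Z h) = 2 * card Z + 2"
    using assms(1,2) disj ab inj by (simp add: doubled_nodes_def card_Un_disjoint card_image)
  show "doubled_nodes a b Z h \<subseteq> {a..b}"
    using assms by (auto simp: doubled_nodes_def)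
  have "(\<Prod>v\<in>Z \<union> (\<lambda>z. z + h) ` Z. g v) = (\<Prod>z\<in>Z. g z) * (\<Prod>z\<in>Z. g (z + h))"
    using assms(2) disj inj by (simp add: prod.union_disjoint prod.reindex)
  then show "(\<Prod>v\<in>doubled_nodes a b Z h. g v) = g a * g b * (\<Prod>z\<in>Z. g z * g (z + h))"
    using assms(1,2) ab by (simp add: doubled_nodes_def prod.distrib mult.assoc)
qed

lemma le_poly_lagrange_doubled_nodes:
  assumes conv: "mconvex (2 * card Z + 1) {a..b} f" and "a < b" "finite Z" "Z \<subseteq> {a<..<b}"
    and shift: "\<forall>z\<in>Z. z + h \<in> {a<..<b} - Z" and "0 < h"
    and t: "t \<in> {a<..<b}" "\<forall>z\<in>Z. h < \<bar>t - z\<bar>"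
  shows "f t \<le> poly (lagrange_poly (doubled_nodes a b Z h) f) t"
proof (rule le_poly_lagrange_poly[OF conv])
  note nodes = doubled_nodes_shifted[OF assms(2-4) shift]
  show "finite (doubled_nodes a b Z h)"
    using assms(3) by (simp add: doubled_nodes_def)
  show "card (doubled_nodes a b Z h) = 2 * card Z + 1 + 1" "doubled_nodes a b Z h \<subseteq> {a..b}"
    using nodes(1,2) by simp_all
  show "t \<in> {a..b} - doubled_nodes a b Z h"
    using t \<open>0 < h\<close> by (force simp: doubled_nodes_def)
  have "(t - a) * (t - b) \<le> 0"
    using t(1) by (simp add: mult_nonneg_nonpos)
  moreover have "(t - z) * (t - (z + h)) \<ge> 0" if "z \<in> Z" for z
  proof -
    have "h < \<bar>t - z\<bar>"
      using t(2) that by blast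
    then show ?thesis
      using \<open>0 < h\<close> by (cases "t > z") (auto simp: zero_le_mult_iff)
  qed
  then have "(\<Prod>z\<in>Z. (t - z) * (t - (z + h))) \<ge> 0"
    by (rule prod_nonneg)
  ultimately show "(\<Prod>v\<in>doubled_nodes a b Z h. t - v) \<le> 0"
    unfolding nodes(3) by (rule mult_nonpos_nonneg)
qed

lemma poly_lagrange_doubled_nodes_split:
  assumes "a < b" "finite Z" "Z \<subseteq> {a<..<b}" and s: "s \<in> {a<..<b} - Z"
    and shift: "\<forall>z\<in>Z. z + h \<in> {a<..<b} - insert s Z"
  shows "poly (lagrange_poly (doubled_nodes a b Z h) f) s = f s -
    (set_divdiff f (insert b (insert s Z) \<union> (\<lambda>z. z + h) ` Z)
      - set_divdiff f (insert a (insert s Z) \<union> (\<lambda>z. z + h) ` Z)) / (b - a)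
    * ((s - a) * (s - b) * (\<Prod>z\<in>Z. (s - z) * (s - (z + h))))"
proof -
  define B where "B = insert s Z \<union> (\<lambda>z. z + h) ` Z"
  have "s \<notin> doubled_nodes a b Z h" "a \<notin> B" "b \<notin> B" "finite B"
    using shift s assms(2,3) by (auto simp: doubled_nodes_def B_def)
  moreover have "insert s (doubled_nodes a b Z h) = insert a (insert b B)"
    by (auto simp: doubled_nodes_def B_def)
  moreover have "(\<Prod>v\<in>doubled_nodes a b Z h. s - v) = (s - a) * (s - b) * (\<Prod>z\<in>Z. (s - z) * (s - (z + h)))"
    using doubled_nodes_shifted(3)[OF assms(1-3)] shift by blast
  ultimately show ?thesis
    using lagrange_remainder[of "doubled_nodes a b Z h" s f] set_divdiff_insert_insert[of B a b f]
      \<open>a < b\<close> by (simp add: B_def doubled_nodes_def)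
qed

lemma convergent_poly_lagrange_doubled_nodes:
  assumes conv: "mconvex (2 * card Z + 1) {a..b} f" and "a < b" "finite Z" "Z \<subseteq> {a<..<b}"
    and s: "s \<in> {a<..<b} - Z"
  shows "\<exists>L. ((\<lambda>h. poly (lagrange_poly (doubled_nodes a b Z h) f) s) \<longlongrightarrow> L) (at_right 0)"
proof -
  define D where "D c h = set_divdiff f (insert c (insert s Z) \<union> (\<lambda>z. z + h) ` Z)" for c h
  define \<Omega> where "\<Omega> h = (s - a) * (s - b) * (\<Prod>z\<in>Z. (s - z) * (s - (z + h)))" for h
  have "\<exists>L. (D c \<longlongrightarrow> L) (at_right 0)" if "c \<in> {a, b}" for c
    unfolding D_def
  proof (rule set_divdiff_shift_tendsto[OF conv])
    have "c \<notin> insert s Z"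
      using that s assms(4) by auto
    then show "card (insert c (insert s Z)) + card Z = 2 * card Z + 1 + 1"
      using s assms(3) by simp
  qed (use that s assms(2-4) in auto)
  then obtain La Lb where "(D a \<longlongrightarrow> La) (at_right 0)" "(D b \<longlongrightarrow> Lb) (at_right 0)"
    by blast
  moreover have "(\<Omega> \<longlongrightarrow> \<Omega> 0) (at_right 0)"
    unfolding \<Omega>_def by (intro tendsto_intros)
  ultimately have "((\<lambda>h. f s - (D b h - D a h) / (b - a) * \<Omega> h) \<longlongrightarrow> f s - (Lb - La) / (b - a) * \<Omega> 0)
      (at_right 0)"
    by (intro tendsto_intros) (use \<open>a < b\<close> in auto)
  moreover have "\<forall>\<^sub>F h in at_right 0. \<forall>z\<in>Z. z + h \<in> {a<..<b} - insert s Z"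
    by (rule eventually_shift_into[OF assms(3) finite.insertI[OF assms(3)] assms(4)])
  then have "\<forall>\<^sub>F h in at_right 0. f s - (D b h - D a h) / (b - a) * \<Omega> h =
      poly (lagrange_poly (doubled_nodes a b Z h) f) s"
    by eventually_elim (simp add: poly_lagrange_doubled_nodes_split[OF assms(2-4) s] D_def \<Omega>_def)
  ultimately have "((\<lambda>h. poly (lagrange_poly (doubled_nodes a b Z h) f) s) \<longlongrightarrow>
      f s - (Lb - La) / (b - a) * \<Omega> 0) (at_right 0)"
    by (rule Lim_transform_eventually)
  then show ?thesis ..
qed

lemma eventually_le_poly_lagrange_doubled_nodes:
  assumes conv: "mconvex (2 * card Z + 1) {a..b} f" and "a < b" "finite Z" "Z \<subseteq> {a<..<b}"
    and t: "t \<in> {a<..<b} - Z"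
  shows "\<forall>\<^sub>F h in at_right 0. f t \<le> poly (lagrange_poly (doubled_nodes a b Z h) f) t"
proof -
  have "\<forall>\<^sub>F h in at_right 0. h < \<bar>t - z\<bar>" if "z \<in> Z" for z
  proof -
    have "0 < \<bar>t - z\<bar>"
      using t that by auto
    from eventually_at_right_real[OF this] show ?thesis
      by (rule eventually_mono) auto
  qed
  then have "\<forall>\<^sub>F h in at_right 0. \<forall>z\<in>Z. h < \<bar>t - z\<bar>"
    using assms(3) by (simp add: eventually_ball_finite_distrib)
  moreover have "\<forall>\<^sub>F h in at_right 0. \<forall>z\<in>Z. z + h \<in> {a<..<b} - Z"
    by (rule eventually_shift_into[OF assms(3,3,4)])
  ultimately show ?thesis
    using eventually_at_right_less
    by eventually_elim (use t in \<open>auto intro!: le_poly_lagrange_doubled_nodes[OF assms(1-4)]\<close>)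
qed

lemma tendsto_poly_lagrange_doubled_nodes:
  assumes conv: "mconvex (2 * card Z + 1) {a..b} f" and "a < b" "finite Z" "Z \<subseteq> {a<..<b}"
  obtains p where "degree p \<le> 2 * card Z + 1"
    "\<And>t. ((\<lambda>h. poly (lagrange_poly (doubled_nodes a b Z h) f) t) \<longlongrightarrow> poly p t) (at_right 0)"
proof -
  define P where "P h = lagrange_poly (doubled_nodes a b Z h) f" for h
  have "infinite ({a<..<b} - Z)"
    using assms(2,3) by (simp add: Diff_infinite_finite)
  then obtain S where S: "finite S" "card S = 2 * card Z + 2" "S \<subseteq> {a<..<b} - Z"
    using infinite_arbitrarily_large by blast
  define L where "L s = Lim (at_right 0) (\<lambda>h. poly (P h) s)" for s
  have "((\<lambda>h. poly (P h) t) \<longlongrightarrow> poly (lagrange_poly S L) t) (at_right 0)" for t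
  proof (rule tendsto_poly_lagrange_poly[OF S(1)])
    show "\<forall>\<^sub>F h in at_right 0. degree (P h) < card S"
      using eventually_shift_into[OF assms(3,3,4)]
    proof eventually_elim
      case (elim h)
      then show ?case
        using degree_lagrange_poly_le[of "doubled_nodes a b Z h" f] doubled_nodes_shifted(1)[OF assms(2-4) elim]
          assms(3) S(2) by (simp add: P_def doubled_nodes_def)
    qed
    show "((\<lambda>h. poly (P h) s) \<longlongrightarrow> L s) (at_right 0)" if s: "s \<in> S" for s
    proof -
      obtain l where "((\<lambda>h. poly (P h) s) \<longlongrightarrow> l) (at_right 0)"
        using convergent_poly_lagrange_doubled_nodes[OF assms, of s] S(3) s unfolding P_def by blast
      then show ?thesis
        unfolding L_def by (simp add: tendsto_Lim)
    qed
  qed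
  moreover have "degree (lagrange_poly S L) \<le> 2 * card Z + 1"
    using degree_lagrange_poly_le[OF S(1), of L] S(2) by simp
  ultimately show ?thesis
    using that unfolding P_def by blast
qed

section \<open>Upper interpolants\<close>

lemma ex_upper_interpolant:
  assumes conv: "mconvex (2 * card Z + 1) {a..b} f" and "a < b" "finite Z" "Z \<subseteq> {a<..<b}"
  shows "\<exists>p. degree p \<le> 2 * card Z + 1 \<and> (\<forall>u\<in>insert a (insert b Z). poly p u = f u)
           \<and> (\<forall>t\<in>{a..b}. f t \<le> poly p t)"
proof -
  obtain p where deg: "degree p \<le> 2 * card Z + 1" and
    lim: "\<And>t. ((\<lambda>h. poly (lagrange_poly (doubled_nodes a b Z h) f) t) \<longlongrightarrow> poly p t) (at_right 0)"
    using tendsto_poly_lagrange_doubled_nodes[OF assms] by blast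
  have nodes: "poly p u = f u" if "u \<in> insert a (insert b Z)" for u
  proof -
    have "poly (lagrange_poly (doubled_nodes a b Z h) f) u = f u" for h
      using that assms(3) by (intro poly_lagrange_poly_node) (auto simp: doubled_nodes_def)
    then show ?thesis
      using lim[of u] by (simp add: tendsto_const_iff)
  qed
  have "f t \<le> poly p t" if "t \<in> {a<..<b} - Z" for t
    using lim eventually_le_poly_lagrange_doubled_nodes[OF assms that]
    by (rule tendsto_lowerbound) simp
  then have "f t \<le> poly p t" if "t \<in> {a..b}" for t
    using that nodes[of t] by (cases "t \<in> insert a (insert b Z)") auto
  then show ?thesis
    using deg nodes by blast
qed

lemma ex_finite_superset_card:
  assumes "infinite S" "finite A" "A \<subseteq> S" "card A \<le> k"
  obtains B where "A \<subseteq> B" "B \<subseteq> S" "finite B" "card B = k"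
proof -
  have "infinite (S - A)"
    using assms(1,2) by (rule Diff_infinite_finite[rotated])
  then obtain C where C: "C \<subseteq> S - A" "finite C" "card C = k - card A"
    using infinite_arbitrarily_large by blast
  then have "card (A \<union> C) = k"
    using assms(2,4) by (subst card_Un_disjoint) auto
  then show ?thesis
    using assms(2,3) C by (intro that[of "A \<union> C"]) auto
qed

theorem corollary3:
  fixes n :: nat and a b :: real and f :: "real \<Rightarrow> real" and x :: "nat \<Rightarrow> real"
  assumes "n \<ge> 1" and "a < b"
    and "mconvex (2*n - 1) {a..b} f"
    and "x 1 = a"
    and "\<forall>i\<in>{2..n}. x i \<in> {a<..<b}"
    and "x (n+1) = b"
  shows "\<exists>p :: real poly. degree p \<le> 2*n - 1
           \<and> (\<forall>i\<in>{1..n+1}. poly p (x i) = f (x i))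
           \<and> (\<forall>t\<in>{a..b}. poly p t \<ge> f t)"
proof -
  have "infinite {a<..<b}" "x ` {2..n} \<subseteq> {a<..<b}" "card (x ` {2..n}) \<le> n - 1"
    using assms(2,5) card_image_le[of "{2..n}" x] by auto
  then obtain Z where Z: "x ` {2..n} \<subseteq> Z" "Z \<subseteq> {a<..<b}" "finite Z" "card Z = n - 1"
    by (metis ex_finite_superset_card finite_atLeastAtMost finite_imageI)
  moreover have "2 * card Z + 1 = 2 * n - 1"
    using Z(4) assms(1) by simp
  ultimately obtain p where "degree p \<le> 2 * n - 1" "\<forall>u\<in>insert a (insert b Z). poly p u = f u"
      "\<forall>t\<in>{a..b}. f t \<le> poly p t"
    using ex_upper_interpolant[of Z a b f] assms(2,3) by auto
  moreover have "x i \<in> insert a (insert b Z)" if "i \<in> {1..n+1}" for i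
  proof (cases "i \<in> {2..n}")
    case False
    then have "i = 1 \<or> i = n + 1"
      using that by auto
    then show ?thesis
      using assms(4,6) by auto
  qed (use Z(1) in blast)
  ultimately show ?thesis
    by blast
qed

end
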